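(* Let $m>0$, $\alpha>0$ and $\omega\ge 0$, and let $(\phi(t),\gamma(t),k(t))_{t\ge0}$ be a trajectory of the dynamical system \[ \frac{d\phi}{dt}=\gamma,\qquad \frac{d\gamma}{dt}=\frac{1}{m}\bigl(-\gamma+\omega-k\sin\phi\bigr),\qquad \frac{dk}{dt}=\alpha\cos\phi-k, \] with initial condition $(\phi(0),\gamma(0),k(0))=(\phi_0,\gamma_0,k_0)$, where $\phi$ is an angle (taken modulo $2\pi$ in $[-\pi,\pi)$) and $\gamma,k\in\mathbb{R}$. Then for every $\epsilon>0$ there exists a time $T_\epsilon\ge 0$ such that $|k(t)|\le \alpha+\epsilon$ and $|\gamma(t)|\le \omega+\alpha+\epsilon$ for all $t\ge T_\epsilon$.
   Context: This system describes the phase difference $\phi$, its derivative $\gamma$, and the (rescaled) adaptive coupling strength $k$ of two identical-mass Kuramoto oscillators with inertia and Hebbian learning; $m$ is the (rescaled) mass, $\alpha$ the learning enhancement factor, and $\omega$ the intrinsic-frequency difference (the paper assumes $\omega\ge 0$ throughout). *)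

theory Defs
  imports "HOL-Analysis.Analysis"
begin

end

theory Submission
  imports Defs "HOL-Real_Asymp.Real_Asymp"
begin

text \<open>Both \<open>k\<close> and \<open>\<gamma>\<close> obey linear relaxation equations \<open>x' = c (g - x)\<close> with \<open>c > 0\<close>:
  \<open>k' = \<alpha> cos \<phi> - k\<close> with forcing bounded by \<open>\<alpha>\<close>, and \<open>m \<gamma>' = (\<omega> - k sin \<phi>) - \<gamma>\<close> with forcing
  eventually bounded by \<open>\<omega> + \<alpha> + \<epsilon>\<close> by the bound on \<open>k\<close>.  The integrating factor \<open>exp (c t)\<close> shows that a solution
  of such an equation exceeds the bound on its forcing by at most a multiple of \<open>exp (- c t)\<close>.\<close>

lemma relaxation_upper_bound:
  fixes f g :: "real \<Rightarrow> real" and c B T t :: real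
  assumes c: "c \<ge> 0"
    and deriv: "\<And>s. s \<ge> T \<Longrightarrow> (f has_real_derivative c * (g s - f s)) (at s within {T..})"
    and bound: "\<And>s. s \<ge> T \<Longrightarrow> g s \<le> B"
    and t: "T \<le> t"
  shows "f t - B \<le> (f T - B) * exp (- c * (t - T))"
proof -
  define u where "u s = exp (c * s) * (f s - B)" for s
  have du: "(u has_real_derivative c * exp (c * s) * (g s - B)) (at s within {T..})"
    if "s \<ge> T" for s
    unfolding u_def
    by (rule derivative_eq_intros refl deriv that)+ (simp add: algebra_simps)
  have "u t \<le> u T"
  proof (rule DERIV_nonpos_imp_decreasing_open[OF t])
    fix s assume s: "T < s" "s < t"
    have "at s within {T..} = at s"
      using s by (intro at_within_interior) simp
    moreover have "c * exp (c * s) * (g s - B) \<le> 0"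
      using c bound[of s] s by (simp add: mult_nonneg_nonpos)
    ultimately show "\<exists>y. DERIV u s :> y \<and> y \<le> 0"
      using du[of s] s by auto
  next
    show "continuous_on {T..t} u"
      by (rule DERIV_continuous_on[OF has_field_derivative_subset[OF du]]) auto
  qed
  then have "exp (c * t) * (f t - B) \<le> exp (c * t) * ((f T - B) * exp (- c * (t - T)))"
    by (simp add: u_def mult_exp_exp algebra_simps)
  then show ?thesis
    by simp
qed

lemma relaxation_eventually_bounded:
  fixes f g :: "real \<Rightarrow> real" and c B T \<epsilon> :: real
  assumes c: "c > 0" and \<epsilon>: "\<epsilon> > 0"
    and deriv: "\<And>t. t \<ge> T \<Longrightarrow> (f has_real_derivative c * (g t - f t)) (at t within {T..})"
    and bound: "\<forall>\<^sub>F t in at_top. \<bar>g t\<bar> \<le> B"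
  shows "\<forall>\<^sub>F t in at_top. \<bar>f t\<bar> \<le> B + \<epsilon>"
proof -
  obtain S where S: "S \<ge> T" and bound_S: "\<And>t. t \<ge> S \<Longrightarrow> \<bar>g t\<bar> \<le> B"
    using bound unfolding eventually_at_top_linorder by (metis max.boundedE nle_le)
  have deriv_S: "(f has_real_derivative c * (g t - f t)) (at t within {S..})" if "t \<ge> S" for t
    using deriv[of t] that S by (auto intro: has_field_derivative_subset)
  have neg_deriv_S:
    "((\<lambda>t. - f t) has_real_derivative c * (- g t - - f t)) (at t within {S..})" if "t \<ge> S" for t
    using DERIV_minus[OF deriv_S[OF that]] by (simp add: algebra_simps)
  have upper: "f t - B \<le> (f S - B) * exp (- c * (t - S))" if "t \<ge> S" for t
    using relaxation_upper_bound[of c S f g B t] c deriv_S bound_S that by force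
  have lower: "- f t - B \<le> (- f S - B) * exp (- c * (t - S))" if "t \<ge> S" for t
    using relaxation_upper_bound[of c S "\<lambda>t. - f t" "\<lambda>t. - g t" B t] c neg_deriv_S bound_S that
    by force
  have "((\<lambda>t. C * exp (- c * (t - S))) \<longlongrightarrow> 0) at_top" for C
    using c by real_asymp
  then have "\<forall>\<^sub>F t in at_top. (f S - B) * exp (- c * (t - S)) < \<epsilon>"
    and "\<forall>\<^sub>F t in at_top. (- f S - B) * exp (- c * (t - S)) < \<epsilon>"
    using \<epsilon> by (auto dest: order_tendstoD(2))
  moreover have "\<forall>\<^sub>F t in at_top. t \<ge> S"
    by (rule eventually_ge_at_top)
  ultimately show ?thesis
  proof eventually_elim
    case (elim t)
    then show ?case
      using upper[of t] lower[of t] by linarith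
  qed
qed

theorem theorem1:
  fixes m \<alpha> \<omega> \<phi>\<^sub>0 \<gamma>\<^sub>0 k\<^sub>0 :: real
    and \<phi> \<gamma> k :: "real \<Rightarrow> real"
  assumes "m > 0" and "\<alpha> > 0" and "\<omega> \<ge> 0"
    and "\<phi> 0 = \<phi>\<^sub>0" and "\<gamma> 0 = \<gamma>\<^sub>0" and "k 0 = k\<^sub>0"
    and "\<And>t. t \<ge> 0 \<Longrightarrow> (\<phi> has_real_derivative \<gamma> t) (at t within {0..})"
    and "\<And>t. t \<ge> 0 \<Longrightarrow>
           (\<gamma> has_real_derivative (1 / m) * (- \<gamma> t + \<omega> - k t * sin (\<phi> t))) (at t within {0..})"
    and "\<And>t. t \<ge> 0 \<Longrightarrow> (k has_real_derivative \<alpha> * cos (\<phi> t) - k t) (at t within {0..})"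
  shows "\<forall>\<epsilon>>0. \<exists>T\<ge>0. \<forall>t\<ge>T. \<bar>k t\<bar> \<le> \<alpha> + \<epsilon> \<and> \<bar>\<gamma> t\<bar> \<le> \<omega> + \<alpha> + \<epsilon>"
proof (intro allI impI)
  fix \<epsilon> :: real assume \<epsilon>: "\<epsilon> > 0"
  have k_bound: "\<forall>\<^sub>F t in at_top. \<bar>k t\<bar> \<le> \<alpha> + \<epsilon> / 2"
    by (rule relaxation_eventually_bounded[where c = 1 and T = 0 and g = "\<lambda>t. \<alpha> * cos (\<phi> t)"])
      (use assms(2,9) \<epsilon> in \<open>auto simp: abs_mult\<close>)
  then have "\<forall>\<^sub>F t in at_top. \<bar>\<omega> - k t * sin (\<phi> t)\<bar> \<le> \<omega> + \<alpha> + \<epsilon> / 2"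
  proof eventually_elim
    case (elim t)
    have "\<bar>k t * sin (\<phi> t)\<bar> \<le> \<bar>k t\<bar>"
      by (simp add: abs_mult mult_left_le)
    with elim show ?case
      using assms(3) by linarith
  qed
  then have \<gamma>_bound: "\<forall>\<^sub>F t in at_top. \<bar>\<gamma> t\<bar> \<le> \<omega> + \<alpha> + \<epsilon> / 2 + \<epsilon> / 2"
    by (rule relaxation_eventually_bounded[where c = "1 / m" and T = 0, rotated -1])
      (use assms(1,8) \<epsilon> in \<open>auto simp: algebra_simps\<close>)
  have "\<forall>\<^sub>F t in at_top. \<bar>k t\<bar> \<le> \<alpha> + \<epsilon> \<and> \<bar>\<gamma> t\<bar> \<le> \<omega> + \<alpha> + \<epsilon>"
    using k_bound \<gamma>_bound by eventually_elim (use \<epsilon> in auto)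
  then obtain N where "\<forall>t\<ge>N. \<bar>k t\<bar> \<le> \<alpha> + \<epsilon> \<and> \<bar>\<gamma> t\<bar> \<le> \<omega> + \<alpha> + \<epsilon>"
    unfolding eventually_at_top_linorder by blast
  then show "\<exists>T\<ge>0. \<forall>t\<ge>T. \<bar>k t\<bar> \<le> \<alpha> + \<epsilon> \<and> \<bar>\<gamma> t\<bar> \<le> \<omega> + \<alpha> + \<epsilon>"
    by (intro exI[of _ "max N 0"]) auto
qed

end
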